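(* Let $\varphi\in\mathrm{THT}(\mathsf X,\mathsf U)$ and let $M=(T,T)$ be an equilibrium model of $\varphi$. Then $M$ is almost-empty, i.e. $T(i)\neq\emptyset$ for only finitely many $i$.
   Context: Fix a finite set $P$ of atomic propositions. THT formulas over $P$: $\varphi ::= p \mid \bot \mid \varphi\vee\varphi \mid \varphi\wedge\varphi \mid \varphi\rightarrow\varphi \mid \mathsf{X}\varphi \mid \varphi\,\mathsf{U}\,\varphi \mid \varphi\,\mathsf{R}\,\varphi$, with $\neg\varphi:=\varphi\rightarrow\bot$ and $\top:=\neg\bot$. A THT interpretation is a pair $M=(H,T)$ of infinite words over $2^P$ with $H(i)\subseteq T(i)$ for all $i$; it is total if $H=T$. Satisfaction $M,i\models\varphi$ is defined by: - $M,i\not\models\bot$; - $M,i\models p$ iff $p\in H(i)$; - $\vee$ and $\wedge$ are interpreted as usual; - $M,i\models\varphi\rightarrow\psi$ iff for both $H'\in\{H,T\}$, either $(H',T),i\not\models\varphi$ or $(H',T),i\models\psi$; - $M,i\models\mathsf X\varphi$ iff $M,i+1\models\varphi$; - $M,i\models\varphi\mathsf U\psi$ iff some $j\ge i$ has $M,j\models\psi$ and $M,k\models\varphi$ for all $i\le k<j$. $M\models\varphi$ means $M,0\models\varphi$. An equilibrium model of $\varphi$ is a total $(T,T)\models\varphi$ with $(H,T)\not\models\varphi$ whenever $H(i)\subseteq T(i)$ for all $i$ and $H\ne T$. $\mathrm{THT}(\mathsf X,\mathsf U)$ is the set of THT formulas whose only temporal modalities are $\mathsf X$ and $\mathsf U$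 (no bounds on nesting). A total interpretation is almost-empty if it has only finitely many positions $i$ with $T(i)\ne\emptyset$. *)

theory Defs
  imports Main
begin

datatype 'a tht =
    Atom 'a
  | Bot
  | Disj "'a tht" "'a tht"
  | Conj "'a tht" "'a tht"
  | Impl "'a tht" "'a tht"
  | Next "'a tht"
  | Until "'a tht" "'a tht"
  | Release "'a tht" "'a tht"

type_synonym 'a word = "nat \<Rightarrow> 'a set"

fun sat :: "'a word \<Rightarrow> 'a word \<Rightarrow> nat \<Rightarrow> 'a tht \<Rightarrow> bool" where
  "sat H T i (Atom p) = (p \<in> H i)"
| "sat H T i Bot = False"
| "sat H T i (Disj f g) = (sat H T i f \<or> sat H T i g)"
| "sat H T i (Conj f g) = (sat H T i f \<and> sat H T i g)"
| "sat H T i (Impl f g) = ((\<not> sat H T i f \<or> sat H T i g) \<and> (\<not> sat T T i f \<or> sat T T i g))"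
| "sat H T i (Next f) = sat H T (Suc i) f"
| "sat H T i (Until f g) = (\<exists>j\<ge>i. sat H T j g \<and> (\<forall>k. i \<le> k \<and> k < j \<longrightarrow> sat H T k f))"
| "sat H T i (Release f g) = (\<forall>j\<ge>i. sat H T j g \<or> (\<exists>k. i \<le> k \<and> k < j \<and> sat H T k f))"

fun in_XU :: "'a tht \<Rightarrow> bool" where
  "in_XU (Atom p) = True"
| "in_XU Bot = True"
| "in_XU (Disj f g) = (in_XU f \<and> in_XU g)"
| "in_XU (Conj f g) = (in_XU f \<and> in_XU g)"
| "in_XU (Impl f g) = (in_XU f \<and> in_XU g)"
| "in_XU (Next f) = in_XU f"
| "in_XU (Until f g) = (in_XU f \<and> in_XU g)"
| "in_XU (Release f g) = False"

definition equilibrium_model :: "'a word \<Rightarrow> 'a tht \<Rightarrow> bool" where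
  "equilibrium_model T \<phi> \<longleftrightarrow> sat T T 0 \<phi> \<and>
     (\<forall>H. (\<forall>i. H i \<subseteq> T i) \<and> H \<noteq> T \<longrightarrow> \<not> sat H T 0 \<phi>)"

definition almost_empty :: "'a word \<Rightarrow> bool" where
  "almost_empty T \<longleftrightarrow> finite {i. T i \<noteq> {}}"

end

theory Submission
  imports Defs
begin

text \<open>Satisfaction of a formula built from X and U at a total model (T,T) is witnessed at
  finitely many positions, so for every H \<subseteq> T it only depends on a finite prefix of H; the
  implication case works because a false antecedent stays false for every H \<subseteq> T (persistence).
  If T were nonempty beyond that prefix, cutting T down to the empty set there would give a strictly
  smaller H that still satisfies the formula, contradicting minimality.\<close>

lemma sat_imp_sat_total:
  assumes "\<forall>k. H k \<subseteq> T k" and "sat H T i f"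
  shows "sat T T i f"
  using assms by (induction f arbitrary: i) (simp_all, blast+)

definition sat_from_prefix :: "'a word \<Rightarrow> nat \<Rightarrow> nat \<Rightarrow> 'a tht \<Rightarrow> bool" where
  "sat_from_prefix T N i f \<longleftrightarrow>
     (\<forall>H. (\<forall>k. H k \<subseteq> T k) \<longrightarrow> (\<forall>k<N. H k = T k) \<longrightarrow> sat H T i f)"

lemma sat_from_prefixI:
  "(\<And>H. \<forall>k. H k \<subseteq> T k \<Longrightarrow> \<forall>k<N. H k = T k \<Longrightarrow> sat H T i f) \<Longrightarrow> sat_from_prefix T N i f"
  unfolding sat_from_prefix_def by blast

lemma sat_from_prefixD:
  "sat_from_prefix T N i f \<Longrightarrow> \<forall>k. H k \<subseteq> T k \<Longrightarrow> \<forall>k<N. H k = T k \<Longrightarrow> sat H T i f"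
  unfolding sat_from_prefix_def by blast

lemma eventually_sat_from_prefix:
  assumes "in_XU f" and "sat T T i f"
  shows "\<forall>\<^sub>F N in sequentially. sat_from_prefix T N i f"
  using assms
proof (induction f arbitrary: i)
  case (Atom p)
  show ?case
    using eventually_gt_at_top[of i]
    by eventually_elim (use Atom.prems in \<open>auto intro: sat_from_prefixI\<close>)
next
  case Bot
  then show ?case by simp
next
  case (Disj f g)
  then consider "\<forall>\<^sub>F N in sequentially. sat_from_prefix T N i f"
    | "\<forall>\<^sub>F N in sequentially. sat_from_prefix T N i g"
    by auto
  then show ?case
    by cases (erule eventually_mono, simp add: sat_from_prefix_def)+
next
  case (Conj f g)
  then have "\<forall>\<^sub>F N in sequentially. sat_from_prefix T N i f \<and> sat_from_prefix T N i g"
    by (intro eventually_conj) auto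
  then show ?case
    by eventually_elim (simp add: sat_from_prefix_def)
next
  case (Impl f g)
  show ?case
  proof (cases "sat T T i f")
    case True
    with Impl have g_total: "sat T T i g" by simp
    with Impl have "\<forall>\<^sub>F N in sequentially. sat_from_prefix T N i g" by simp
    then show ?thesis
      by eventually_elim (use g_total in \<open>simp add: sat_from_prefix_def\<close>)
  next
    case False
    have "sat H T i (Impl f g)" if "\<forall>k. H k \<subseteq> T k" for H
      using False sat_imp_sat_total[OF that] by auto
    then show ?thesis
      by (simp add: sat_from_prefixI)
  qed
next
  case (Next f)
  then show ?case by (simp add: sat_from_prefix_def)
next
  case (Until f g)
  from Until.prems have XU: "in_XU f" "in_XU g" by simp_all
  from Until.prems obtain j where
    j: "i \<le> j" "sat T T j g" "\<And>k. i \<le> k \<Longrightarrow> k < j \<Longrightarrow> sat T T k f"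
    by auto
  have "\<forall>\<^sub>F N in sequentially. sat_from_prefix T N j g"
    using XU(2) j(2) by (rule Until.IH(2))
  moreover have "\<forall>\<^sub>F N in sequentially. \<forall>k\<in>{i..<j}. sat_from_prefix T N k f"
    using Until.IH(1)[OF XU(1) j(3)] by (intro eventually_ball_finite) auto
  ultimately show ?case
  proof eventually_elim
    case (elim N)
    show ?case
    proof (rule sat_from_prefixI)
      fix H assume "\<forall>k. H k \<subseteq> T k" "\<forall>k<N. H k = T k"
      with elim have "sat H T j g" "\<forall>k\<in>{i..<j}. sat H T k f"
        by (auto dest: sat_from_prefixD)
      with j(1) show "sat H T i (Until f g)"
        by auto
    qed
  qed
next
  case (Release f g)
  then show ?case by simp
qed

lemma equilibrium_model_empty_beyond_prefix:
  assumes "equilibrium_model T \<phi>" and "sat_from_prefix T N 0 \<phi>" and "N \<le> k"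
  shows "T k = {}"
proof (rule ccontr)
  assume "T k \<noteq> {}"
  define H where "H i = (if i < N then T i else {})" for i
  have H_sub: "\<forall>i. H i \<subseteq> T i" and "\<forall>i<N. H i = T i"
    by (simp_all add: H_def)
  with assms(2) have "sat H T 0 \<phi>"
    by (rule sat_from_prefixD)
  moreover have "H k \<noteq> T k"
    using \<open>T k \<noteq> {}\<close> \<open>N \<le> k\<close> by (simp add: H_def)
  then have "H \<noteq> T"
    by auto
  ultimately show False
    using assms(1) H_sub unfolding equilibrium_model_def by blast
qed

theorem mainTheorem13:
  fixes \<phi> :: "'a::finite tht" and T :: "'a word"
  assumes "in_XU \<phi>" and "equilibrium_model T \<phi>"
  shows "almost_empty T"
proof -
  have "sat T T 0 \<phi>"
    using assms(2) by (simp add: equilibrium_model_def)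
  with assms(1) have "\<forall>\<^sub>F N in sequentially. sat_from_prefix T N 0 \<phi>"
    by (rule eventually_sat_from_prefix)
  then obtain N where "sat_from_prefix T N 0 \<phi>"
    unfolding eventually_sequentially by blast
  then have "T i = {}" if "N \<le> i" for i
    using assms(2) that by (intro equilibrium_model_empty_beyond_prefix)
  then have "{i. T i \<noteq> {}} \<subseteq> {..<N}"
    using not_less by blast
  then show ?thesis
    unfolding almost_empty_def by (rule finite_subset) simp
qed

end
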